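(* Consider the structured private pooled-sequencing scheme with constant coverage depth described in the context, with $M$ unknown and $M$ known individuals. Let $\beta\in(0,1)$. If $M\geq 1/\beta$, then the privacy condition $$\frac{I\left(X_{m,n},\ m\in\{0,\dots,M-1\},\ n\in[N];\ \mathcal{R}\right)}{MN}\leq\beta$$ holds, where $\mathcal{R}$ is the set of reads available to the sequencer.
   Context: Setting. Each genome is described by $N$ SNP positions with binary values. There are $M$ "unknown" individuals $m\in\{0,\dots,M-1\}$ with SNP matrix $\mathbf{X}\in\{0,1\}^{M\times N}$ whose entries $X_{m,n}$ are mutually independent (with arbitrary allele-frequency priors), and $M$ "known" individuals $k\in\{0,\dots,M-1\}$ with SNP matrix $\mathbf{Y}\in\{0,1\}^{M\times N}$ whose entries are i.i.d. uniform on $\{0,1\}$ and independent of $\mathbf{X}$; $\mathbf{Y}$ is known to a trusted data collector but unknown to the sequencer. Genomes are sheared into fragments, each containing at most one SNP and mappable unambiguously to its SNP position. All fragments are pooled without individual labels and sent to the sequencer, which reads them, each SNP read being flipped independently with probability $\eta\in(0,1/2)$; $\mathcal{R}$ is the resulting set of reads. In the structured scheme with constant coverage depth, at every SNP position $n$ unknown individual $m$ contributes exactly $2^m\alpha_0$ fragments and known individual $k$ contributes exactly $2^k\alpha_0$ fragments, $\alpha_0\in\mathbb{N}$. Hence for each position $n$ the sequencer's information is the count of read 1's among fragments covering $n$ (modeled, after normalization, as $q_n=\sum_{m=0}^{M-1}2^m(X_{m,n}+Y_{m,n})+\tilde Z_n$ with Gaussian noise $\tilde Z_n$ independent of $\mathbf{X},\mathbf{Y}$).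 *)

theory Defs
  imports "HOL-Probability.Probability" "HOL-Library.Multiset"
begin

text \<open>Fragments are indexed by (is_known, individual, copy, position).
  At position n, individual i (unknown: is_known = False, known: is_known = True)
  contributes exactly 2^i * alpha0 fragments.\<close>

type_synonym frag = "bool \<times> nat \<times> nat \<times> nat"

definition frags :: "nat \<Rightarrow> nat \<Rightarrow> nat \<Rightarrow> frag set" where
  "frags M N alpha0 = {(k, i, j, n). i < M \<and> j < 2 ^ i * alpha0 \<and> n < N}"

definition frag_value :: "(nat \<times> nat \<Rightarrow> bool) \<Rightarrow> (nat \<times> nat \<Rightarrow> bool) \<Rightarrow> frag \<Rightarrow> bool" where
  "frag_value X Y f = (case f of (k, i, j, n) \<Rightarrow> if k then Y (i, n) else X (i, n))"

text \<open>The pooled, unlabelled set of reads: a multiset of (SNP position, read value);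
  the read value is the true value flipped iff the flip indicator F is True.\<close>
definition reads :: "nat \<Rightarrow> nat \<Rightarrow> nat \<Rightarrow> (nat \<times> nat \<Rightarrow> bool) \<Rightarrow> (nat \<times> nat \<Rightarrow> bool)
    \<Rightarrow> (frag \<Rightarrow> bool) \<Rightarrow> (nat \<times> bool) multiset" where
  "reads M N alpha0 X Y F =
     image_mset (\<lambda>f. (snd (snd (snd f)), frag_value X Y f \<noteq> F f)) (mset_set (frags M N alpha0))"

definition pooled_joint :: "nat \<Rightarrow> nat \<Rightarrow> nat \<Rightarrow> real \<Rightarrow> (nat \<times> nat \<Rightarrow> real)
    \<Rightarrow> ((nat \<times> nat \<Rightarrow> bool) \<times> (nat \<times> bool) multiset) pmf" where
  "pooled_joint M N alpha0 eta p =
     do { X \<leftarrow> Pi_pmf ({..<M} \<times> {..<N}) False (\<lambda>mn. bernoulli_pmf (p mn));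
          Y \<leftarrow> Pi_pmf ({..<M} \<times> {..<N}) False (\<lambda>_. bernoulli_pmf (1/2));
          F \<leftarrow> Pi_pmf (frags M N alpha0) False (\<lambda>_. bernoulli_pmf eta);
          return_pmf (X, reads M N alpha0 X Y F) }"

definition info_X_R :: "nat \<Rightarrow> nat \<Rightarrow> nat \<Rightarrow> real \<Rightarrow> (nat \<times> nat \<Rightarrow> real) \<Rightarrow> real" where
  "info_X_R M N alpha0 eta p =
     prob_space.mutual_information (measure_pmf (pooled_joint M N alpha0 eta p)) 2
       (count_space UNIV) (count_space UNIV) fst snd"

end

theory Submission
  imports Defs
begin

text \<open>Given the unknown genomes x, the read multiset depends on the pooled data only through
  the noiseless signal c(n) = \<Sum> 2^i (x(i,n) + y(i,n)) (sum over i < M): flips are exchangeable, so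
  permuting fragments with equal allele and position leaves the read law unchanged. For fixed
  x the map y \<mapsto> c is injective on the 2^(MN) known genomes, while c ranges over at most
  2^((M+1)N) values. Hence P(R = r | X = x) \<le> 2^N Q(r) for the mixture Q of read laws over a
  uniformly random c, and any such domination of the conditional law by a fixed distribution
  bounds the mutual information by log 2^N = N bits. Dividing by MN gives 1/M \<le> \<beta>.\<close>

section \<open>Mutual information of finitely supported joint laws\<close>

lemma sets_pair_pmf_singleton: "{w} \<in> sets (measure_pmf A \<Otimes>\<^sub>M measure_pmf B)"
proof -
  have "{fst w} \<times> {snd w} \<in> sets (measure_pmf A \<Otimes>\<^sub>M measure_pmf B)"
    by (intro pair_measureI) auto
  then show ?thesis
    by simp
qed

lemma emeasure_pair_pmf_singleton:
  "emeasure (measure_pmf A \<Otimes>\<^sub>M measure_pmf B) {w} = pmf A (fst w) * pmf B (snd w)"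
proof -
  have "emeasure (measure_pmf A \<Otimes>\<^sub>M measure_pmf B) ({fst w} \<times> {snd w})
      = emeasure (measure_pmf A) {fst w} * emeasure (measure_pmf B) {snd w}"
    by (rule measure_pmf.emeasure_pair_measure_Times) auto
  then show ?thesis
    by (simp add: emeasure_pmf_single ennreal_mult)
qed

text \<open>The product sigma-algebra need not contain every set, so the density is written as a
  finite combination of singleton indicators, which is measurable.\<close>

lemma distr_pmf_pair_eq_density:
  fixes J :: "('a \<times> 'b) pmf"
  defines "A \<equiv> map_pmf fst J" and "B \<equiv> map_pmf snd J"
  defines "c \<equiv> \<lambda>w. pmf J w / (pmf A (fst w) * pmf B (snd w))"
  defines "f \<equiv> \<lambda>z. \<Sum>w\<in>set_pmf J. c w * indicator {w} z"
  assumes fin: "finite (set_pmf J)"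
  shows "distr (measure_pmf J) (count_space UNIV \<Otimes>\<^sub>M count_space UNIV) (\<lambda>z. (fst z, snd z))
    = density (measure_pmf A \<Otimes>\<^sub>M measure_pmf B) f"
proof (rule measure_eqI)
  let ?P = "measure_pmf A \<Otimes>\<^sub>M measure_pmf B"
  let ?S = "set_pmf J"
  have sets_P: "sets ?P = sets (count_space UNIV \<Otimes>\<^sub>M count_space UNIV)"
    by (intro sets_pair_measure_cong) auto
  then show "sets (distr (measure_pmf J) (count_space UNIV \<Otimes>\<^sub>M count_space UNIV) (\<lambda>z. (fst z, snd z)))
      = sets (density ?P f)"
    by simp
  fix E assume "E \<in> sets (distr (measure_pmf J) (count_space UNIV \<Otimes>\<^sub>M count_space UNIV) (\<lambda>z. (fst z, snd z)))"
  then have E: "E \<in> sets ?P"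
    using sets_P by simp
  have marginals_pos: "0 < pmf A (fst w) \<and> 0 < pmf B (snd w)" if "w \<in> ?S" for w
    using that by (auto simp: A_def B_def pmf_positive_iff)
  have f_eq: "f z = (if z \<in> ?S then c z else 0)" for z
    using fin unfolding f_def by (auto simp: indicator_def if_distrib sum.If_cases)
  have f_pointwise: "ennreal (f z) * indicator E z
      = (\<Sum>w\<in>?S. ennreal (c w) * indicator ({w} \<inter> E) z)" for z
    using fin by (auto simp: f_eq indicator_def if_distrib sum.If_cases)
  have f_meas: "f \<in> borel_measurable ?P"
    unfolding f_def by (intro borel_measurable_sum borel_measurable_times borel_measurable_const
        borel_measurable_indicator sets_pair_pmf_singleton)
  have "emeasure (density ?P f) E = (\<integral>\<^sup>+ z. ennreal (f z) * indicator E z \<partial>?P)"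
    using E f_meas by (subst emeasure_density) auto
  also have "\<dots> = (\<Sum>w\<in>?S. ennreal (c w) * emeasure ?P ({w} \<inter> E))"
    unfolding f_pointwise using sets.Int[OF sets_pair_pmf_singleton E]
    by (subst nn_integral_sum) (auto intro!: sum.cong nn_integral_cmult_indicator)
  also have "\<dots> = (\<Sum>w\<in>?S. if w \<in> E then ennreal (pmf J w) else 0)"
    by (intro sum.cong) (auto simp: emeasure_pair_pmf_singleton ennreal_mult'[symmetric] c_def
        dest!: marginals_pos)
  also have "\<dots> = emeasure (measure_pmf J) (E \<inter> ?S)"
    using fin by (simp add: emeasure_measure_pmf_finite sum.If_cases Int_commute)
  also have "\<dots> = emeasure (distr (measure_pmf J) (count_space UNIV \<Otimes>\<^sub>M count_space UNIV) (\<lambda>z. (fst z, snd z))) E"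
    using E sets_P by (simp add: emeasure_Int_set_pmf emeasure_distr space_pair_measure)
  finally show "emeasure (distr (measure_pmf J) (count_space UNIV \<Otimes>\<^sub>M count_space UNIV) (\<lambda>z. (fst z, snd z))) E
      = emeasure (density ?P f) E"
    by simp
qed

lemma mutual_information_pmf_finite:
  fixes J :: "('a \<times> 'b) pmf" and b :: real
  assumes fin: "finite (set_pmf J)" and b: "1 < b"
  shows "prob_space.mutual_information (measure_pmf J) b (count_space UNIV) (count_space UNIV) fst snd
    = (\<Sum>z\<in>set_pmf J. pmf J z * log b (pmf J z / (pmf (map_pmf fst J) (fst z) * pmf (map_pmf snd J) (snd z))))"
proof -
  define A where "A = map_pmf fst J"
  define B where "B = map_pmf snd J"
  define c where "c = (\<lambda>w. pmf J w / (pmf A (fst w) * pmf B (snd w)))"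
  define f where "f = (\<lambda>z. \<Sum>w\<in>set_pmf J. c w * indicator {w} z)"
  let ?P = "measure_pmf A \<Otimes>\<^sub>M measure_pmf B"
  interpret P: pair_prob_space "measure_pmf A" "measure_pmf B"
    by unfold_locales
  have f_eq: "f z = (if z \<in> set_pmf J then c z else 0)" for z
    using fin unfolding f_def by (auto simp: indicator_def if_distrib sum.If_cases)
  have "prob_space.mutual_information (measure_pmf J) b (count_space UNIV) (count_space UNIV) fst snd
      = KL_divergence b ?P (density ?P f)"
    unfolding prob_space.mutual_information_def[OF measure_pmf.prob_space_axioms]
    unfolding f_def c_def A_def B_def distr_pmf_pair_eq_density[OF fin, symmetric]
    by (simp add: map_pmf_rep_eq)
  also have "\<dots> = (\<integral>z. f z * log b (f z) \<partial>?P)"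
    using b unfolding f_def
    by (intro P.KL_density) (auto intro!: borel_measurable_sum borel_measurable_times
        borel_measurable_indicator sets_pair_pmf_singleton sum_nonneg mult_nonneg_nonneg
        simp del: times_divide_eq_left simp: c_def)
  also have "\<dots> = (\<integral>z. (\<Sum>w\<in>set_pmf J. c w * log b (c w) * indicator {w} z) \<partial>?P)"
    using fin by (intro Bochner_Integration.integral_cong) (auto simp: f_eq indicator_def sum.If_cases)
  also have "\<dots> = (\<Sum>w\<in>set_pmf J. c w * log b (c w) * measure ?P {w})"
    by (subst Bochner_Integration.integral_sum)
      (auto intro!: integrable_real_indicator sets_pair_pmf_singleton
        simp: emeasure_pair_pmf_singleton space_pair_measure)
  also have "\<dots> = (\<Sum>w\<in>set_pmf J. pmf J w * log b (c w))"
  proof (rule sum.cong)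
    fix w assume "w \<in> set_pmf J"
    then have "0 < pmf A (fst w)" "0 < pmf B (snd w)"
      by (auto simp: A_def B_def pmf_positive_iff)
    then show "c w * log b (c w) * measure ?P {w} = pmf J w * log b (c w)"
      by (simp add: c_def P.emeasure_eq_measure[symmetric] emeasure_pair_pmf_singleton
          measure_def)
  qed simp
  finally show ?thesis
    unfolding c_def A_def B_def .
qed

lemma sum_mult_log_ratio_nonpos:
  fixes p q :: "'a \<Rightarrow> real"
  assumes "finite Y" and "1 < b"
    and pos: "\<And>y. y \<in> Y \<Longrightarrow> 0 < p y \<and> 0 < q y"
    and "sum p Y = 1" and "sum q Y \<le> 1"
  shows "(\<Sum>y\<in>Y. p y * log b (q y / p y)) \<le> 0"
proof -
  have "p y * ln (q y / p y) \<le> q y - p y" if "y \<in> Y" for y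
  proof -
    have "p y * ln (q y / p y) \<le> p y * (q y / p y - 1)"
      using pos[OF that] by (intro mult_left_mono ln_le_minus_one) auto
    also have "\<dots> = q y - p y"
      using pos[OF that] by (simp add: field_simps)
    finally show ?thesis .
  qed
  then have "(\<Sum>y\<in>Y. p y * ln (q y / p y)) \<le> sum q Y - sum p Y"
    by (simp add: sum_mono flip: sum_subtractf)
  also have "\<dots> \<le> 0"
    using assms by simp
  finally have "(\<Sum>y\<in>Y. p y * ln (q y / p y)) / ln b \<le> 0"
    using \<open>1 < b\<close> by (simp add: divide_nonpos_pos)
  then show ?thesis
    by (simp add: log_def sum_divide_distrib)
qed

text \<open>If the joint law is dominated by C times the product of the first marginal with a
  sub-probability Q, then the mutual information is at most log C: the excess over log C is
  minus a relative entropy of the second marginal with respect to Q.\<close>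

lemma mutual_information_pmf_le_log:
  fixes J :: "('a \<times> 'b) pmf" and Q :: "'b \<Rightarrow> real"
  assumes fin: "finite (set_pmf J)" and b: "1 < b" and C: "0 < C"
    and Q_nonneg: "\<And>y. 0 \<le> Q y" and Q_sum: "(\<Sum>y\<in>snd ` set_pmf J. Q y) \<le> 1"
    and dominated: "\<And>x y. pmf J (x, y) \<le> C * pmf (map_pmf fst J) x * Q y"
  shows "prob_space.mutual_information (measure_pmf J) b (count_space UNIV) (count_space UNIV) fst snd
    \<le> log b C"
proof -
  define A where "A = map_pmf fst J"
  define B where "B = map_pmf snd J"
  let ?S = "set_pmf J"
  have pos: "0 < pmf J z \<and> 0 < pmf A (fst z) \<and> 0 < pmf B (snd z) \<and> 0 < Q (snd z)" if "z \<in> ?S" for z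
  proof -
    have "0 < pmf J z" "0 < pmf A (fst z)" "0 < pmf B (snd z)"
      using that by (auto simp: A_def B_def pmf_positive_iff)
    moreover have "0 < C * pmf A (fst z) * Q (snd z)"
      using dominated[of "fst z" "snd z"] \<open>0 < pmf J z\<close> by (simp add: A_def)
    ultimately show ?thesis
      using C Q_nonneg[of "snd z"] by (simp add: zero_less_mult_iff)
  qed
  have pointwise: "pmf J z * log b (pmf J z / (pmf A (fst z) * pmf B (snd z)))
      \<le> pmf J z * log b C + pmf J z * log b (Q (snd z) / pmf B (snd z))" if "z \<in> ?S" for z
  proof -
    have "pmf J z / (pmf A (fst z) * Q (snd z)) \<le> C"
      using dominated[of "fst z" "snd z"] pos[OF that] by (simp add: A_def divide_le_eq mult_ac)
    then have "log b (pmf J z / (pmf A (fst z) * Q (snd z))) \<le> log b C"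
      using pos[OF that] b by (intro log_mono) auto
    moreover have "log b (pmf J z / (pmf A (fst z) * pmf B (snd z)))
        = log b (pmf J z / (pmf A (fst z) * Q (snd z))) + log b (Q (snd z) / pmf B (snd z))"
      using pos[OF that] b by (simp add: log_mult_pos[symmetric] field_simps)
    ultimately show ?thesis
      using pos[OF that] by (simp add: distrib_left mult_left_mono)
  qed
  have B_eq: "pmf B y = (\<Sum>z\<in>{z\<in>?S. snd z = y}. pmf J z)" for y
  proof -
    have "pmf B y = measure J ({z\<in>?S. snd z = y})"
      unfolding B_def pmf_map by (subst measure_Int_set_pmf[symmetric]) (simp add: Int_def conj_commute)
    then show ?thesis
      using fin by (simp add: measure_measure_pmf_finite)
  qed
  have "(\<Sum>z\<in>?S. pmf J z * log b (Q (snd z) / pmf B (snd z)))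
      = (\<Sum>y\<in>snd ` ?S. \<Sum>z\<in>{z\<in>?S. snd z = y}. pmf J z * log b (Q (snd z) / pmf B (snd z)))"
    using fin by (intro sum.group[symmetric]) auto
  also have "\<dots> = (\<Sum>y\<in>snd ` ?S. pmf B y * log b (Q y / pmf B y))"
    by (intro sum.cong refl) (simp add: B_eq sum_distrib_right)
  also have "\<dots> \<le> 0"
    using fin b Q_sum pos by (intro sum_mult_log_ratio_nonpos) (auto simp: B_def sum_pmf_eq_1)
  finally have relative_entropy_nonpos:
    "(\<Sum>z\<in>?S. pmf J z * log b (Q (snd z) / pmf B (snd z))) \<le> 0" .
  have "(\<Sum>z\<in>?S. pmf J z * log b (pmf J z / (pmf A (fst z) * pmf B (snd z))))
      \<le> (\<Sum>z\<in>?S. pmf J z) * log b C + (\<Sum>z\<in>?S. pmf J z * log b (Q (snd z) / pmf B (snd z)))"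
    using pointwise by (simp add: sum_mono sum_distrib_right flip: sum.distrib)
  also have "\<dots> \<le> log b C"
    using fin relative_entropy_nonpos by (simp add: sum_pmf_eq_1)
  finally show ?thesis
    using fin b by (simp add: mutual_information_pmf_finite A_def B_def)
qed

lemma
  fixes A :: "'a pmf" and K :: "'a \<Rightarrow> 'b pmf"
  shows map_fst_bind_Pair: "map_pmf fst (bind_pmf A (\<lambda>x. map_pmf (Pair x) (K x))) = A"
    and pmf_bind_Pair: "pmf (bind_pmf A (\<lambda>x. map_pmf (Pair x) (K x))) (x, y) = pmf A x * pmf (K x) y"
proof -
  show "map_pmf fst (bind_pmf A (\<lambda>x. map_pmf (Pair x) (K x))) = A"
    by (simp add: map_bind_pmf pmf.map_comp comp_def bind_return_pmf')
  have "pmf (map_pmf (Pair x') (K x')) (x, y) = (if x' = x then pmf (K x) y else 0)" for x'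
    by (auto simp: pmf_map_inj' inj_on_def pmf_eq_0_set_pmf)
  then have "pmf (bind_pmf A (\<lambda>x. map_pmf (Pair x) (K x))) (x, y)
      = (\<integral>x'. (if x' = x then pmf (K x) y else 0) \<partial>measure_pmf A)"
    by (simp add: pmf_bind)
  also have "\<dots> = pmf A x * pmf (K x) y"
    by (subst integral_measure_pmf[of "{x}"]) (auto split: if_splits)
  finally show "pmf (bind_pmf A (\<lambda>x. map_pmf (Pair x) (K x))) (x, y) = pmf A x * pmf (K x) y" .
qed

section \<open>The read law depends only on allele counts\<close>

lemma exists_permutation_matching_fibres:
  fixes k k' :: "'a \<Rightarrow> 'c"
  assumes fin: "finite A" and cards: "\<And>c. card {a\<in>A. k a = c} = card {a\<in>A. k' a = c}"
  obtains \<pi> where "bij_betw \<pi> A A" and "\<And>a. a \<notin> A \<Longrightarrow> \<pi> a = a"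
    and "\<And>a. a \<in> A \<Longrightarrow> k (\<pi> a) = k' a"
proof -
  have "\<exists>\<sigma>. bij_betw \<sigma> {a\<in>A. k' a = c} {a\<in>A. k a = c}" for c
    using fin cards[of c] by (intro finite_same_card_bij) auto
  then obtain \<sigma> where \<sigma>: "\<And>c. bij_betw (\<sigma> c) {a\<in>A. k' a = c} {a\<in>A. k a = c}"
    by metis
  define \<pi> where "\<pi> a = (if a \<in> A then \<sigma> (k' a) a else a)" for a
  have \<pi>_fibre: "\<pi> a \<in> A \<and> k (\<pi> a) = k' a" if "a \<in> A" for a
    using bij_betwE[OF \<sigma>[of "k' a"]] that by (auto simp: \<pi>_def)
  have "inj_on \<pi> A"
  proof (rule inj_onI)
    fix a a' assume a: "a \<in> A" "a' \<in> A" "\<pi> a = \<pi> a'"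
    then have "k' a = k' a'"
      using \<pi>_fibre by metis
    with a show "a = a'"
      using bij_betw_imp_inj_on[OF \<sigma>[of "k' a"]] by (auto simp: \<pi>_def dest: inj_onD)
  qed
  then have "bij_betw \<pi> A A"
    using fin \<pi>_fibre by (intro bij_betw_imageI endo_inj_surj) auto
  with \<pi>_fibre show thesis
    using that by (auto simp: \<pi>_def)
qed

definition read_pmf :: "nat \<Rightarrow> nat \<Rightarrow> nat \<Rightarrow> real \<Rightarrow> (frag \<Rightarrow> bool) \<Rightarrow> (nat \<times> bool) multiset pmf" where
  "read_pmf M N alpha0 eta v = map_pmf
     (\<lambda>F. image_mset (\<lambda>f. (snd (snd (snd f)), v f \<noteq> F f)) (mset_set (frags M N alpha0)))
     (Pi_pmf (frags M N alpha0) False (\<lambda>_. bernoulli_pmf eta))"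

definition ones_count :: "nat \<Rightarrow> nat \<Rightarrow> nat \<Rightarrow> (frag \<Rightarrow> bool) \<Rightarrow> nat \<Rightarrow> nat" where
  "ones_count M N alpha0 v n = card {f \<in> frags M N alpha0. snd (snd (snd f)) = n \<and> v f}"

lemma frags_Sigma: "frags M N alpha0 = (SIGMA k:UNIV. SIGMA i:{..<M}. SIGMA j:{..<2^i*alpha0}. {..<N})"
  by (auto simp: frags_def)

lemma finite_frags: "finite (frags M N alpha0)"
  by (simp add: frags_Sigma)

lemma card_position_value_eq:
  assumes "\<And>n. ones_count M N alpha0 v n = ones_count M N alpha0 v' n"
  shows "card {f \<in> frags M N alpha0. (snd (snd (snd f)), v f) = (n, b)}
    = card {f \<in> frags M N alpha0. (snd (snd (snd f)), v' f) = (n, b)}"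
proof (cases b)
  case True
  then show ?thesis
    using assms[of n] by (simp add: ones_count_def)
next
  case False
  let ?at = "\<lambda>w P. {f \<in> frags M N alpha0. snd (snd (snd f)) = n \<and> P (w f)}"
  have split: "card (?at w (\<lambda>_. True)) = card (?at w id) + card (?at w Not)" for w
  proof -
    have "?at w (\<lambda>_. True) = ?at w id \<union> ?at w Not"
      by auto
    then show ?thesis
      using finite_frags by (simp add: card_Un_disjoint disjoint_iff)
  qed
  have "card (?at v id) = card (?at v' id)"
    using assms[of n] by (simp add: ones_count_def)
  then have "card (?at v Not) = card (?at v' Not)"
    using split[of v] split[of v'] by simp
  with False show ?thesis
    by simp
qed

text \<open>Flipping is exchangeable, so the read law only sees how many fragments at each position
  carry a 1: a permutation of the fragments matching the two allele assignments transports one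
  flip pattern to the other.\<close>

lemma read_pmf_eq_if_ones_count_eq:
  assumes "\<And>n. ones_count M N alpha0 v n = ones_count M N alpha0 v' n"
  shows "read_pmf M N alpha0 eta v = read_pmf M N alpha0 eta v'"
proof -
  define Fr where "Fr = frags M N alpha0"
  define pos :: "frag \<Rightarrow> nat" where "pos f = snd (snd (snd f))" for f
  define PF where "PF = Pi_pmf Fr False (\<lambda>_. bernoulli_pmf eta)"
  have fin: "finite Fr"
    unfolding Fr_def by (rule finite_frags)
  have cards: "card {f\<in>Fr. (pos f, v f) = c} = card {f\<in>Fr. (pos f, v' f) = c}" for c
    using card_position_value_eq[OF assms, of "fst c" "snd c"] unfolding Fr_def pos_def
    by (cases c) (simp only: fst_conv snd_conv)
  obtain \<pi> where \<pi>: "bij_betw \<pi> Fr Fr" "\<And>f. f \<notin> Fr \<Longrightarrow> \<pi> f = f"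
    and fibre: "\<And>f. f \<in> Fr \<Longrightarrow> (pos (\<pi> f), v (\<pi> f)) = (pos f, v' f)"
    using exists_permutation_matching_fibres[OF fin cards] by blast
  have PF_perm: "map_pmf (\<lambda>F. F \<circ> \<pi>) PF = PF"
    unfolding PF_def using fin \<pi> by (intro Pi_pmf_bij_betw[symmetric]) auto
  have reads_perm: "image_mset (\<lambda>f. (pos f, v f \<noteq> F f)) (mset_set Fr)
      = image_mset (\<lambda>f. (pos f, v' f \<noteq> (F \<circ> \<pi>) f)) (mset_set Fr)" for F
  proof -
    have "mset_set Fr = image_mset \<pi> (mset_set Fr)"
      using \<pi> by (simp add: image_mset_mset_set bij_betw_def)
    then have "image_mset (\<lambda>f. (pos f, v f \<noteq> F f)) (mset_set Fr)
        = image_mset (\<lambda>f. (pos f, v f \<noteq> F f)) (image_mset \<pi> (mset_set Fr))"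
      by (rule arg_cong)
    also have "\<dots> = image_mset (\<lambda>f. (pos (\<pi> f), v (\<pi> f) \<noteq> F (\<pi> f))) (mset_set Fr)"
      by (simp add: multiset.map_comp comp_def)
    also have "\<dots> = image_mset (\<lambda>f. (pos f, v' f \<noteq> (F \<circ> \<pi>) f)) (mset_set Fr)"
      using fibre fin by (intro image_mset_cong) auto
    finally show ?thesis .
  qed
  have "read_pmf M N alpha0 eta v = map_pmf (\<lambda>F. image_mset (\<lambda>f. (pos f, v f \<noteq> F f)) (mset_set Fr)) PF"
    unfolding read_pmf_def Fr_def pos_def PF_def ..
  also have "\<dots> = map_pmf (\<lambda>F. image_mset (\<lambda>f. (pos f, v' f \<noteq> F f)) (mset_set Fr))
      (map_pmf (\<lambda>F. F \<circ> \<pi>) PF)"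
    unfolding reads_perm pmf.map_comp comp_def ..
  also have "\<dots> = read_pmf M N alpha0 eta v'"
    unfolding PF_perm unfolding read_pmf_def Fr_def pos_def PF_def ..
  finally show ?thesis .
qed

section \<open>The pooled signal\<close>

lemma binary_sum_less: "(\<Sum>i<M. 2^i * of_bool (a i) :: nat) < 2^M"
proof (induction M)
  case (Suc M)
  have "(\<Sum>i<Suc M. 2^i * of_bool (a i) :: nat) \<le> (\<Sum>i<M. 2^i * of_bool (a i)) + 2^M"
    by simp
  with Suc show ?case
    by simp
qed simp

lemma binary_sum_inj:
  assumes "(\<Sum>i<M. 2^i * of_bool (a i) :: nat) = (\<Sum>i<M. 2^i * of_bool (b i))" and "i < M"
  shows "a i = b i"
  using assms
proof (induction M)
  case (Suc M)
  have "(\<Sum>i<M. 2^i * of_bool (a i) :: nat) + 2^M * of_bool (a M)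
      = (\<Sum>i<M. 2^i * of_bool (b i)) + 2^M * of_bool (b M)"
    using Suc.prems(1) by simp
  moreover note binary_sum_less[where M = M and a = a] binary_sum_less[where M = M and a = b]
  ultimately have "a M = b M" and "(\<Sum>i<M. 2^i * of_bool (a i) :: nat) = (\<Sum>i<M. 2^i * of_bool (b i))"
    by (cases "a M"; cases "b M"; simp)+
  with Suc show ?case
    by (cases "i = M") auto
qed simp

text \<open>The paper's q_n without the noise term (and without the factor alpha0).\<close>

definition pooled_sum :: "nat \<Rightarrow> nat \<Rightarrow> (nat \<times> nat \<Rightarrow> bool) \<Rightarrow> (nat \<times> nat \<Rightarrow> bool) \<Rightarrow> nat \<Rightarrow> nat" where
  "pooled_sum M N x y = restrict (\<lambda>n. \<Sum>i<M. 2^i * (of_bool (x (i, n)) + of_bool (y (i, n)))) {..<N}"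

definition pooled_sums :: "nat \<Rightarrow> nat \<Rightarrow> (nat \<Rightarrow> nat) set" where
  "pooled_sums M N = PiE {..<N} (\<lambda>_. {..<2^(M+1)})"

lemma pooled_sum_split:
  "(\<Sum>i<M. 2^i * (of_bool (x (i, n)) + of_bool (y (i, n))) :: nat)
    = (\<Sum>i<M. 2^i * of_bool (x (i, n))) + (\<Sum>i<M. 2^i * of_bool (y (i, n)))"
  by (simp add: sum.distrib distrib_left)

lemma pooled_sum_in_pooled_sums: "pooled_sum M N x y \<in> pooled_sums M N"
proof -
  have "(\<Sum>i<M. 2^i * (of_bool (x (i, n)) + of_bool (y (i, n))) :: nat) < 2^(M+1)" for n
    using binary_sum_less[where M = M and a = "\<lambda>i. x (i, n)"]
      binary_sum_less[where M = M and a = "\<lambda>i. y (i, n)"]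
    unfolding pooled_sum_split by simp
  then show ?thesis
    by (auto simp: pooled_sum_def pooled_sums_def)
qed

lemma finite_pooled_sums: "finite (pooled_sums M N)"
  by (simp add: pooled_sums_def finite_PiE)

lemma card_pooled_sums: "card (pooled_sums M N) = 2^((M+1)*N)"
  by (simp add: pooled_sums_def card_PiE power_add power_mult)

lemma inj_on_pooled_sum: "inj_on (pooled_sum M N x) (PiE_dflt ({..<M} \<times> {..<N}) False (\<lambda>_. UNIV))"
proof (rule inj_onI, rule ext)
  fix y y' and z :: "nat \<times> nat"
  assume y: "y \<in> PiE_dflt ({..<M} \<times> {..<N}) False (\<lambda>_. UNIV)"
    and y': "y' \<in> PiE_dflt ({..<M} \<times> {..<N}) False (\<lambda>_. UNIV)"
    and eq: "pooled_sum M N x y = pooled_sum M N x y'"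
  obtain i n where z: "z = (i, n)"
    by (cases z)
  show "y z = y' z"
  proof (cases "i < M \<and> n < N")
    case True
    then have "(\<Sum>i<M. 2^i * of_bool (y (i, n)) :: nat) = (\<Sum>i<M. 2^i * of_bool (y' (i, n)))"
      using fun_cong[OF eq, of n] by (simp add: pooled_sum_def pooled_sum_split)
    then have "y (i, n) = y' (i, n)"
      using binary_sum_inj[where a = "\<lambda>i. y (i, n)" and b = "\<lambda>i. y' (i, n)"] True by blast
    with z show ?thesis
      by simp
  next
    case False
    with z y y' show ?thesis
      by (auto simp: PiE_dflt_def)
  qed
qed

lemma ones_count_frag_value:
  assumes "n < N"
  shows "ones_count M N alpha0 (frag_value x y) n = alpha0 * pooled_sum M N x y n"
proof -
  let ?carries = "\<lambda>k i. if k then y (i, n) else x (i, n)"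
  have "{f \<in> frags M N alpha0. snd (snd (snd f)) = n \<and> frag_value x y f}
      = (SIGMA k:UNIV. SIGMA i:{i \<in> {..<M}. ?carries k i}. {..<2^i * alpha0} \<times> {n})"
    using assms by (auto simp: frags_def frag_value_def)
  then have "ones_count M N alpha0 (frag_value x y) n
      = (\<Sum>k\<in>UNIV. \<Sum>i\<in>{i \<in> {..<M}. ?carries k i}. 2^i * alpha0)"
    by (simp add: ones_count_def card_SigmaI)
  also have "\<dots> = (\<Sum>k\<in>UNIV. \<Sum>i<M. if ?carries k i then 2^i * alpha0 else 0)"
    by (simp only: sum.inter_filter finite_lessThan)
  also have "\<dots> = alpha0 * pooled_sum M N x y n"
    using assms by (simp add: UNIV_bool pooled_sum_def sum_distrib_left algebra_simps sum.distrib sum.If_cases)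
  finally show ?thesis .
qed

lemma ones_count_eq_if_pooled_sum_eq:
  assumes "pooled_sum M N x y = pooled_sum M N x' y'"
  shows "ones_count M N alpha0 (frag_value x y) n = ones_count M N alpha0 (frag_value x' y') n"
proof (cases "n < N")
  case True
  then show ?thesis
    by (simp add: ones_count_frag_value assms)
next
  case False
  then have "{f \<in> frags M N alpha0. snd (snd (snd f)) = n \<and> v f} = {}" for v
    by (auto simp: frags_def)
  then show ?thesis
    by (simp only: ones_count_def)
qed

section \<open>Bounding the leakage\<close>

lemma finite_set_Pi_pmf:
  fixes p :: "'a \<Rightarrow> 'b::finite pmf"
  assumes "finite A"
  shows "finite (set_pmf (Pi_pmf A dflt p))"
proof (rule finite_subset)
  show "set_pmf (Pi_pmf A dflt p) \<subseteq> PiE_dflt A dflt (\<lambda>_. UNIV)"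
    using set_Pi_pmf_subset[OF assms, of dflt p] by (auto simp: PiE_dflt_def)
qed (use assms in auto)

lemma Pi_pmf_bernoulli_half:
  assumes "finite A"
  shows "Pi_pmf A False (\<lambda>_. bernoulli_pmf (1/2)) = pmf_of_set (PiE_dflt A False (\<lambda>_. UNIV))"
  using assms by (simp add: bernoulli_pmf_half_conv_pmf_of_set Pi_pmf_of_set)

lemma pmf_bind_pmf_of_set_inj_le:
  assumes "inj_on h A" and "h ` A \<subseteq> B" and "finite B" and "A \<noteq> {}"
  shows "pmf (bind_pmf (pmf_of_set A) (\<lambda>a. f (h a))) x
    \<le> card B / card A * pmf (bind_pmf (pmf_of_set B) f) x"
proof -
  have "finite A"
    using assms by (meson finite_imageD finite_subset)
  moreover have "B \<noteq> {}"
    using assms by blast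
  moreover have "(\<Sum>a\<in>A. pmf (f (h a)) x) = (\<Sum>b\<in>h ` A. pmf (f b) x)"
    using assms by (simp add: sum.reindex)
  moreover have "\<dots> \<le> (\<Sum>b\<in>B. pmf (f b) x)"
    using assms by (intro sum_mono2) auto
  ultimately show ?thesis
    using assms by (simp add: pmf_bind_pmf_of_set divide_right_mono)
qed

text \<open>For c outside the range of pooled_sum the SOME-choice is arbitrary; there only the fact
  that the result is a pmf is used.\<close>

definition reads_of_pooled_sum :: "nat \<Rightarrow> nat \<Rightarrow> nat \<Rightarrow> real \<Rightarrow> (nat \<Rightarrow> nat) \<Rightarrow> (nat \<times> bool) multiset pmf" where
  "reads_of_pooled_sum M N alpha0 eta c =
    (let xy = SOME xy. pooled_sum M N (fst xy) (snd xy) = c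
     in read_pmf M N alpha0 eta (frag_value (fst xy) (snd xy)))"

lemma read_pmf_eq_reads_of_pooled_sum:
  "read_pmf M N alpha0 eta (frag_value x y) = reads_of_pooled_sum M N alpha0 eta (pooled_sum M N x y)"
proof -
  let ?xy = "SOME xy. pooled_sum M N (fst xy) (snd xy) = pooled_sum M N x y"
  have "pooled_sum M N x y = pooled_sum M N (fst ?xy) (snd ?xy)"
    by (rule someI[where x = "(x, y)", THEN sym]) simp
  then show ?thesis
    unfolding reads_of_pooled_sum_def Let_def
    by (intro read_pmf_eq_if_ones_count_eq ones_count_eq_if_pooled_sum_eq)
qed

definition reads_given_unknown :: "nat \<Rightarrow> nat \<Rightarrow> nat \<Rightarrow> real \<Rightarrow> (nat \<times> nat \<Rightarrow> bool) \<Rightarrow> (nat \<times> bool) multiset pmf" where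
  "reads_given_unknown M N alpha0 eta x =
    bind_pmf (Pi_pmf ({..<M} \<times> {..<N}) False (\<lambda>_. bernoulli_pmf (1/2)))
      (\<lambda>y. read_pmf M N alpha0 eta (frag_value x y))"

definition reads_mixture :: "nat \<Rightarrow> nat \<Rightarrow> nat \<Rightarrow> real \<Rightarrow> (nat \<times> bool) multiset pmf" where
  "reads_mixture M N alpha0 eta = bind_pmf (pmf_of_set (pooled_sums M N)) (reads_of_pooled_sum M N alpha0 eta)"

text \<open>The known genomes act as a one-time pad: for fixed unknown genomes the pooled signal is an
  injective image of the uniformly random known genomes, with 2^(MN) values inside a range of
  size 2^((M+1)N).\<close>

lemma pmf_reads_given_unknown_le:
  "pmf (reads_given_unknown M N alpha0 eta x) r \<le> 2^N * pmf (reads_mixture M N alpha0 eta) r"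
proof -
  let ?Y = "PiE_dflt ({..<M} \<times> {..<N}) False (\<lambda>_. UNIV :: bool set)"
  have card_Y: "card ?Y = 2^(M*N)"
    by (simp add: card_PiE_dflt card_cartesian_product)
  have reads_eq: "reads_given_unknown M N alpha0 eta x
      = bind_pmf (pmf_of_set ?Y) (\<lambda>y. reads_of_pooled_sum M N alpha0 eta (pooled_sum M N x y))"
    by (simp add: reads_given_unknown_def Pi_pmf_bernoulli_half read_pmf_eq_reads_of_pooled_sum)
  have "pmf (reads_given_unknown M N alpha0 eta x) r
      \<le> card (pooled_sums M N) / card ?Y * pmf (reads_mixture M N alpha0 eta) r"
    unfolding reads_eq reads_mixture_def
    by (rule pmf_bind_pmf_of_set_inj_le)
      (auto simp: inj_on_pooled_sum pooled_sum_in_pooled_sums finite_pooled_sums)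
  moreover have "card (pooled_sums M N) / card ?Y = (2^N :: real)"
    unfolding card_Y card_pooled_sums by (simp add: power_add power_mult_distrib field_simps flip: power_mult)
  ultimately show ?thesis
    by simp
qed

lemma pooled_joint_eq_bind_reads_given_unknown:
  "pooled_joint M N alpha0 eta p
    = bind_pmf (Pi_pmf ({..<M} \<times> {..<N}) False (\<lambda>mn. bernoulli_pmf (p mn)))
        (\<lambda>x. map_pmf (Pair x) (reads_given_unknown M N alpha0 eta x))"
  by (simp add: pooled_joint_def reads_given_unknown_def read_pmf_def reads_def map_pmf_def
      bind_assoc_pmf bind_return_pmf)

lemma finite_set_pmf_pooled_joint: "finite (set_pmf (pooled_joint M N alpha0 eta p))"
  by (auto simp: pooled_joint_def set_bind_pmf finite_set_Pi_pmf finite_frags intro!: finite_UN_I)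

lemma info_X_R_le: "info_X_R M N alpha0 eta p \<le> N"
proof -
  let ?J = "pooled_joint M N alpha0 eta p"
  let ?X = "Pi_pmf ({..<M} \<times> {..<N}) False (\<lambda>mn. bernoulli_pmf (p mn))"
  let ?Q = "pmf (reads_mixture M N alpha0 eta)"
  have "pmf ?J (x, r) \<le> 2^N * pmf (map_pmf fst ?J) x * ?Q r" for x r
    using mult_left_mono[OF pmf_reads_given_unknown_le[of M N alpha0 eta x r], of "pmf ?X x"]
    by (simp add: pooled_joint_eq_bind_reads_given_unknown pmf_bind_Pair map_fst_bind_Pair mult_ac)
  moreover have "(\<Sum>r\<in>snd ` set_pmf ?J. ?Q r) \<le> 1"
    using finite_set_pmf_pooled_joint
    by (simp add: measure_measure_pmf_finite[symmetric])
  ultimately have "info_X_R M N alpha0 eta p \<le> log 2 (2^N)"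
    unfolding info_X_R_def
    by (intro mutual_information_pmf_le_log finite_set_pmf_pooled_joint) auto
  then show ?thesis
    by simp
qed

theorem theorem2:
  fixes M N alpha0 :: nat and eta beta :: real and p :: "nat \<times> nat \<Rightarrow> real"
  assumes "alpha0 \<ge> 1"
    and "0 < eta" and "eta < 1/2"
    and "\<And>mn. 0 \<le> p mn \<and> p mn \<le> 1"
    and "0 < beta" and "beta < 1"
    and "real M \<ge> 1 / beta"
  shows "info_X_R M N alpha0 eta p / (real M * real N) \<le> beta"
proof (cases "N = 0")
  case False
  have "1 / real M \<le> beta"
    using assms(5,7) by (simp add: divide_le_eq mult.commute)
  moreover have "info_X_R M N alpha0 eta p / (real M * real N) \<le> real N / (real M * real N)"
    using info_X_R_le by (intro divide_right_mono) auto
  ultimately show ?thesis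
    using False by simp
qed (use assms(5) in simp)

end
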